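(* Assume (A.a) and (A.b). Let $\beta\in[0,1)$, $\lambda\in[0,\frac{\beta}{1-\beta}]$, and step sizes $\{\alpha_k\}_k\subset(0,\infty)$ with $\alpha_k\le\frac{(1-\beta)(1-\beta^m)}{4Lm}$ for all $k$, $\sum_{k=1}^\infty\alpha_k=\infty$ and $\sum_{k=1}^\infty\alpha_k^3<\infty$, and let the sequences be generated by RRM with arbitrary permutations. Then $\|z^k-x^k\|\to0$ as $k\to\infty$.
   Context: Let $n,d\in\mathbb N$, $f_1,\dots,f_n:\mathbb R^d\to\mathbb R$ continuously differentiable, $f:=\frac1n\sum_{i=1}^n f_i$, $[n]:=\{1,\dots,n\}$. Fix a mini-batch size $b\in\mathbb N$ with $m:=n/b\in\mathbb N$. Random reshuffling with momentum (RRM) with step sizes $\{\alpha_k\}_{k\ge1}\subset(0,\infty)$ and parameters $\beta,\lambda$ generates sequences as follows: start with $x^1=\tilde x^1\in\mathbb R^d$; for each $k=1,2,\dots$ choose a permutation $\pi^k=(\pi^k_1,\dots,\pi^k_n)$ of $[n]$, set $y_0^k=\tilde x^k$, $y_1^k=x^k$, and for $i=1,\dots,m$ compute $\hat y_i^k=y_i^k+\lambda(y_i^k-y_{i-1}^k)$, $d_i^k=\frac1b\sum_{j=(i-1)b+1}^{ib}\nabla f_{\pi^k_j}(\hat y_i^k)$, $y_{i+1}^k=y_i^k-\alpha_kd_i^k+\beta(y_i^k-y_{i-1}^k)$; then set $\tilde x^{k+1}=y_m^k$, $x^{k+1}=y_{m+1}^k$. The proxy iterates are $z^k:=\frac{1}{1-\beta}x^k-\frac{\beta}{1-\beta}\tilde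 x^k$. Assumption (A.a): there are $L>0$ and $\bar f\in\mathbb R$ such that each $\nabla f_i$ is $L$-Lipschitz and $f_i(x)\ge\bar f$ for all $x\in\mathbb R^d$, $i\in[n]$. Assumption (A.b): $\{\alpha_k\}_k$ is non-increasing. *)

theory Defs
  imports "HOL-Analysis.Analysis"
begin

text \<open>One inner step of RRM in epoch k. The state (yp, yc) = (y_i, y_{i+1}) is mapped to
  (y_{i+1}, y_{i+2}); the mini-batch used is j = i*b+1 .. (i+1)*b of permutation ps.\<close>
definition rrm_step ::
  "(nat \<Rightarrow> 'a::euclidean_space \<Rightarrow> 'a) \<Rightarrow> nat \<Rightarrow> real \<Rightarrow> real \<Rightarrow> real \<Rightarrow>
   (nat \<Rightarrow> nat) \<Rightarrow> nat \<Rightarrow> 'a \<times> 'a \<Rightarrow> 'a \<times> 'a" where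
  "rrm_step grad b a beta lam ps i st =
     (let yp = fst st; yc = snd st;
          yh = yc + lam *\<^sub>R (yc - yp);
          d = (1 / real b) *\<^sub>R (\<Sum>j\<in>{i*b+1..(i+1)*b}. grad (ps j) yh)
      in (yc, yc - a *\<^sub>R d + beta *\<^sub>R (yc - yp)))"

text \<open>Inner loop: rrm_inner ... i = (y_i^k, y_{i+1}^k), starting from (y_0, y_1) = (xt^k, x^k).\<close>
primrec rrm_inner ::
  "(nat \<Rightarrow> 'a::euclidean_space \<Rightarrow> 'a) \<Rightarrow> nat \<Rightarrow> real \<Rightarrow> real \<Rightarrow> real \<Rightarrow>
   (nat \<Rightarrow> nat) \<Rightarrow> 'a \<times> 'a \<Rightarrow> nat \<Rightarrow> 'a \<times> 'a" where
  "rrm_inner grad b a beta lam ps st 0 = st"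
| "rrm_inner grad b a beta lam ps st (Suc i) =
     rrm_step grad b a beta lam ps i (rrm_inner grad b a beta lam ps st i)"

text \<open>Outer loop: rrm_state ... k = (xt^k, x^k) for k \<ge> 1, with xt^1 = x^1 = x1.
  Epoch k uses step size alpha k and permutation ps k; m = number of mini-batches.
  (The value at k = 0 is an irrelevant convention.)\<close>
fun rrm_state ::
  "(nat \<Rightarrow> 'a::euclidean_space \<Rightarrow> 'a) \<Rightarrow> nat \<Rightarrow> nat \<Rightarrow> (nat \<Rightarrow> real) \<Rightarrow> real \<Rightarrow> real \<Rightarrow>
   (nat \<Rightarrow> nat \<Rightarrow> nat) \<Rightarrow> 'a \<Rightarrow> nat \<Rightarrow> 'a \<times> 'a" where
  "rrm_state grad b m alpha beta lam ps x1 0 = (x1, x1)"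
| "rrm_state grad b m alpha beta lam ps x1 (Suc 0) = (x1, x1)"
| "rrm_state grad b m alpha beta lam ps x1 (Suc (Suc k)) =
     rrm_inner grad b (alpha (Suc k)) beta lam (ps (Suc k))
       (rrm_state grad b m alpha beta lam ps x1 (Suc k)) m"

end

theory Submission
  imports Defs "HOL-Combinatorics.Permutations"
begin

text \<open>Let \<open>u\<^sup>k = \<parallel>x\<^sup>k - x\<tilde>\<^sup>k\<parallel>\<close>; since \<open>z\<^sup>k - x\<^sup>k = \<beta>/(1-\<beta>) (x\<^sup>k - x\<tilde>\<^sup>k)\<close>, it suffices that \<open>u\<^sup>k \<rightarrow> 0\<close>.
  Over one epoch the proxy moves by \<open>-\<alpha>\<^sub>k/(1-\<beta>)\<close> times the sum of the mini-batch directions, and as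
  every component is used exactly once per epoch, this sum is the full gradient at \<open>z\<^sup>k\<close> up to an
  error of order \<open>u\<^sup>k + \<alpha>\<^sub>k \<parallel>\<nabla>f(z\<^sup>k)\<parallel>\<close>. For small steps the descent lemma then gives a Lyapunov
  inequality \<open>F(z\<^sup>k\<^sup>+\<^sup>1) + B \<alpha>\<^sub>k\<^sub>+\<^sub>1 (u\<^sup>k\<^sup>+\<^sup>1)\<^sup>2 \<le> (1 + C \<alpha>\<^sub>k\<^sup>3) (F(z\<^sup>k) + B \<alpha>\<^sub>k (u\<^sup>k)\<^sup>2)\<close> with \<open>F = n (f - f\<^sub>b\<^sub>a\<^sub>r)\<close>,
  so \<open>\<Sum> \<alpha>\<^sub>k\<^sup>3 < \<infinity>\<close> keeps \<open>F(z\<^sup>k)\<close>, and with it the gradients at \<open>z\<^sup>k\<close>, bounded. Finally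
  \<open>u\<^sup>k\<^sup>+\<^sup>1 \<le> (1 + \<beta>\<^sup>m)/2 \<cdot> u\<^sup>k + O(\<alpha>\<^sub>k)\<close>, and \<open>\<alpha>\<^sub>k \<rightarrow> 0\<close> forces \<open>u\<^sup>k \<rightarrow> 0\<close>.\<close>

lemma descent_lemma:
  fixes g :: "'a::real_inner \<Rightarrow> real"
  assumes deriv: "\<And>x. (g has_derivative (\<lambda>h. G x \<bullet> h)) (at x)"
    and lip: "\<And>x y. norm (G x - G y) \<le> L * norm (x - y)"
    and L: "0 \<le> L"
  shows "g y \<le> g x + G x \<bullet> (y - x) + L * norm (y - x)^2"
proof -
  let ?g = "\<lambda>t::real. g (x + t *\<^sub>R (y - x))"
  have der: "DERIV ?g t :> G (x + t *\<^sub>R (y - x)) \<bullet> (y - x)" for t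
  proof -
    have "((\<lambda>t. x + t *\<^sub>R (y - x)) has_derivative (\<lambda>h. h *\<^sub>R (y - x))) (at t)"
      by (auto intro!: derivative_eq_intros)
    from has_derivative_compose[OF this deriv]
    have "(?g has_derivative (\<lambda>h. G (x + t *\<^sub>R (y - x)) \<bullet> (h *\<^sub>R (y - x)))) (at t)" .
    moreover have "(\<lambda>h. G (x + t *\<^sub>R (y - x)) \<bullet> (h *\<^sub>R (y - x)))
        = (*) (G (x + t *\<^sub>R (y - x)) \<bullet> (y - x))"
      by (auto simp: fun_eq_iff inner_scaleR_right)
    ultimately show ?thesis unfolding has_field_derivative_def by simp
  qed
  obtain s where s: "0 < s" "s < 1" "?g 1 - ?g 0 = (1 - 0) * (G (x + s *\<^sub>R (y - x)) \<bullet> (y - x))"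
    using MVT2[of 0 1 ?g, OF _ der] by auto
  have "(G (x + s *\<^sub>R (y - x)) - G x) \<bullet> (y - x) \<le> norm (G (x + s *\<^sub>R (y - x)) - G x) * norm (y - x)"
    by (rule norm_cauchy_schwarz)
  also have "\<dots> \<le> L * norm (s *\<^sub>R (y - x)) * norm (y - x)"
    using lip[of "x + s *\<^sub>R (y - x)" x] by (simp add: mult_right_mono)
  also have "\<dots> \<le> L * norm (y - x) * norm (y - x)"
    using s L by (simp add: mult_left_le_one_le mult_right_mono mult.assoc mult.left_commute[of L])
  finally have "(G (x + s *\<^sub>R (y - x)) - G x) \<bullet> (y - x) \<le> L * norm (y - x)^2"
    by (simp add: power2_eq_square mult.assoc)
  then show ?thesis using s(3) by (simp add: inner_diff_left)
qed

text \<open>The test point is one gradient step of length \<open>1/(2L)\<close> from \<open>x\<close>.\<close>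
lemma norm_grad_sq_le:
  fixes g :: "'a::real_inner \<Rightarrow> real"
  assumes deriv: "\<And>x. (g has_derivative (\<lambda>h. G x \<bullet> h)) (at x)"
    and lip: "\<And>x y. norm (G x - G y) \<le> L * norm (x - y)"
    and L: "0 < L" and lower: "\<And>x. c \<le> g x"
  shows "norm (G x)^2 \<le> 4 * L * (g x - c)"
proof -
  let ?y = "x - (1 / (2*L)) *\<^sub>R G x"
  have "c \<le> g ?y" by (rule lower)
  also have "\<dots> \<le> g x + G x \<bullet> (?y - x) + L * norm (?y - x)^2"
    using L by (intro descent_lemma[OF deriv lip]) simp
  also have "\<dots> = g x - norm (G x)^2 / (4 * L)"
    using L by (simp add: inner_scaleR_right power2_norm_eq_inner[symmetric]
        power_mult_distrib field_simps power2_eq_square)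
  finally show ?thesis using L by (simp add: field_simps)
qed

lemma power2_le_convex_split:
  fixes g U Y A :: real
  assumes "0 \<le> g" "g < 1" "0 \<le> A" "A \<le> g * U + Y"
  shows "A^2 \<le> g * U^2 + Y^2 / (1 - g)"
proof -
  have "A^2 \<le> (g * U + Y)^2" using assms by (intro power_mono) auto
  also have "(g * U + Y)^2 \<le> g * U^2 + Y^2 / (1 - g)"
  proof -
    have "(1 - g) * (g * U + Y)^2 + g * ((1 - g) * U - Y)^2 = (1 - g) * (g * U^2) + Y^2"
      by (simp add: algebra_simps power2_eq_square)
    moreover have "0 \<le> g * ((1 - g) * U - Y)^2" using assms by simp
    ultimately have "(1 - g) * (g * U + Y)^2 \<le> (1 - g) * (g * U^2) + Y^2" by linarith
    also have "\<dots> = (1 - g) * (g * U^2 + Y^2 / (1 - g))" using assms by (simp add: field_simps)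
    finally have "(1 - g) * (g * U + Y)^2 \<le> (1 - g) * (g * U^2 + Y^2 / (1 - g))" .
    then show ?thesis using assms by (simp add: mult_le_cancel_left_pos)
  qed
  finally show ?thesis .
qed

lemma LIMSEQ_zero_of_power:
  fixes x :: "nat \<Rightarrow> real"
  assumes "(\<lambda>k. x k ^ p) \<longlonglongrightarrow> 0" "0 < p" "\<And>k. 0 \<le> x k"
  shows "x \<longlonglongrightarrow> 0"
proof -
  have "(\<lambda>k. root p (x k ^ p)) \<longlonglongrightarrow> root p 0" by (intro tendsto_intros assms)
  then show ?thesis using assms(2,3) by (simp add: real_root_power_cancel)
qed

lemma perturbed_contraction_LIMSEQ_zero:
  fixes x e :: "nat \<Rightarrow> real"
  assumes rho: "0 \<le> \<rho>" "\<rho> < 1" and rec: "\<And>k. k \<ge> N \<Longrightarrow> x (Suc k) \<le> \<rho> * x k + e k"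
    and e: "e \<longlonglongrightarrow> 0" and nonneg: "\<And>k. 0 \<le> x k"
  shows "x \<longlonglongrightarrow> 0"
  unfolding LIMSEQ_iff
proof (intro allI impI)
  fix r :: real assume r: "r > 0"
  define \<epsilon> where "\<epsilon> = r / 3"
  have eps: "\<epsilon> > 0" using r by (simp add: \<epsilon>_def)
  have "\<epsilon> * (1 - \<rho>) > 0" using eps rho by simp
  then obtain N0 where N0: "\<forall>k\<ge>N0. norm (e k - 0) < \<epsilon> * (1 - \<rho>)"
    using e unfolding LIMSEQ_iff by blast
  define N1 where "N1 = max N N0"
  have ind: "x (N1 + i) \<le> \<epsilon> + \<rho>^i * x N1" for i
  proof (induction i)
    case 0 then show ?case using eps by simp
  next
    case (Suc i)
    have k: "N1 + i \<ge> N" "N1 + i \<ge> N0" by (auto simp: N1_def)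
    have "x (N1 + Suc i) \<le> \<rho> * x (N1 + i) + e (N1 + i)" using rec[OF k(1)] by simp
    also have "\<dots> \<le> \<rho> * (\<epsilon> + \<rho>^i * x N1) + \<epsilon> * (1 - \<rho>)"
      using Suc rho N0 k(2) by (intro add_mono mult_left_mono) auto
    also have "\<dots> = \<epsilon> + \<rho>^Suc i * x N1" by (simp add: algebra_simps)
    finally show ?case .
  qed
  have "(\<lambda>i. \<rho>^i * x N1) \<longlonglongrightarrow> 0"
    using rho by (intro tendsto_mult_left_zero LIMSEQ_power_zero) auto
  then obtain i0 where i0: "\<forall>i\<ge>i0. norm (\<rho>^i * x N1 - 0) < \<epsilon>"
    using eps unfolding LIMSEQ_iff by blast
  show "\<exists>no. \<forall>n\<ge>no. norm (x n - 0) < r"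
  proof (intro exI allI impI)
    fix k assume k: "k \<ge> N1 + i0"
    then have "x k \<le> \<epsilon> + \<rho>^(k - N1) * x N1" using ind[of "k - N1"] by simp
    also have "\<rho>^(k - N1) * x N1 < \<epsilon>" using i0 k by (auto simp: abs_less_iff)
    finally show "norm (x k - 0) < r" using nonneg[of k] by (simp add: \<epsilon>_def)
  qed
qed

lemma multiplicative_growth_bounded:
  fixes x c :: "nat \<Rightarrow> real"
  assumes rec: "\<And>k. k \<ge> N \<Longrightarrow> x (Suc k) \<le> (1 + c k) * x k"
    and nonneg: "\<And>k. k \<ge> N \<Longrightarrow> 0 \<le> x k"
    and c: "\<And>k. k \<ge> N \<Longrightarrow> 0 \<le> c k" "summable c"
  shows "\<exists>M. \<forall>k\<ge>N. x k \<le> M"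
proof -
  have growth: "x (N + i) \<le> x N * exp (\<Sum>j<i. c (N + j))" for i
  proof (induction i)
    case 0 then show ?case by simp
  next
    case (Suc i)
    have "x (N + Suc i) \<le> (1 + c (N + i)) * x (N + i)" using rec[of "N + i"] by simp
    also have "\<dots> \<le> exp (c (N + i)) * (x N * exp (\<Sum>j<i. c (N + j)))"
      using Suc nonneg[of "N + i"] c(1)[of "N + i"] by (intro mult_mono) auto
    also have "\<dots> = x N * exp (\<Sum>j<Suc i. c (N + j))"
      by (simp add: exp_add[symmetric] algebra_simps)
    finally show ?case .
  qed
  have tail: "summable (\<lambda>j. c (j + N))" using c(2) by (rule summable_ignore_initial_segment)
  have "x k \<le> x N * exp (\<Sum>j. c (j + N))" if "k \<ge> N" for k
  proof -
    have "(\<Sum>j<k - N. c (N + j)) \<le> (\<Sum>j. c (j + N))"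
      using sum_le_suminf[OF tail, of "{..<k - N}"] c(1) by (simp add: add.commute)
    then have "x (N + (k - N)) \<le> x N * exp (\<Sum>j. c (j + N))"
      using growth[of "k - N"] nonneg[of N] by (meson exp_le_cancel_iff mult_left_mono order_trans le_refl)
    then show ?thesis using that by simp
  qed
  then show ?thesis by blast
qed

locale rrm_problem =
  fixes f :: "nat \<Rightarrow> 'a::euclidean_space \<Rightarrow> real"
    and grad :: "nat \<Rightarrow> 'a \<Rightarrow> 'a"
    and n b m :: nat and L fbar beta lam :: real
  assumes n_pos: "n \<ge> 1" and b_pos: "b \<ge> 1" and m_def: "n = m * b"
    and deriv: "\<And>i x. i \<in> {1..n} \<Longrightarrow> (f i has_derivative (\<lambda>h. grad i x \<bullet> h)) (at x)"
    and L_pos: "L > 0"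
    and lip: "\<And>i x y. i \<in> {1..n} \<Longrightarrow> norm (grad i x - grad i y) \<le> L * norm (x - y)"
    and lower: "\<And>i x. i \<in> {1..n} \<Longrightarrow> f i x \<ge> fbar"
    and beta0: "0 \<le> beta" and beta1: "beta < 1"
    and lam0: "0 \<le> lam" and lam1: "lam \<le> beta / (1 - beta)"
begin

definition "K = 2 / (1 - beta)"
definition "gam = beta ^ m"
definition "excess x = (\<Sum>j\<in>{1..n}. f j x - fbar)"
definition "grad_sum x = (\<Sum>j\<in>{1..n}. grad j x)"
definition "grad_norm_sum x = (\<Sum>j\<in>{1..n}. norm (grad j x))"
definition "batch t = {t*b+1..(t+1)*b}"

text \<open>The state \<open>(y\<^sub>0, y\<^sub>1)\<close> of an epoch is \<open>(x\<tilde>\<^sup>k, x\<^sup>k)\<close>.\<close>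
definition "proxy st = (1 / (1 - beta)) *\<^sub>R snd st - (beta / (1 - beta)) *\<^sub>R fst st"
definition "momentum_norm st = norm (snd st - fst st)"

lemma m_pos: "m \<ge> 1" using n_pos m_def by (cases m) auto
lemma K_pos: "K > 0" using beta1 by (simp add: K_def)

lemma gam_lt1: "gam < 1" and gam_nonneg: "gam \<ge> 0"
  using m_pos beta0 beta1 by (auto simp: gam_def power_less_one_iff)

lemma norm_proxy_minus_snd: "norm (proxy st - snd st) = beta / (1 - beta) * momentum_norm st"
proof -
  have "1 / (1 - beta) = 1 + beta / (1 - beta)" using beta1 by (simp add: field_simps)
  then have "proxy st - snd st = (beta / (1 - beta)) *\<^sub>R (snd st - fst st)"
    unfolding proxy_def by (simp add: algebra_simps)
  then show ?thesis using beta0 beta1 by (simp add: momentum_norm_def)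
qed

lemma descent_component:
  "j \<in> {1..n} \<Longrightarrow> f j y \<le> f j x + grad j x \<bullet> (y - x) + L * norm (y - x)^2"
  using L_pos by (intro descent_lemma[OF deriv lip]) auto

lemma excess_nonneg: "excess x \<ge> 0"
  unfolding excess_def by (rule sum_nonneg) (use lower in auto)

lemma excess_descent: "excess y \<le> excess x + grad_sum x \<bullet> (y - x) + real n * L * norm (y - x)^2"
proof -
  have "excess y \<le> (\<Sum>j\<in>{1..n}. f j x - fbar + grad j x \<bullet> (y - x) + L * norm (y - x)^2)"
    unfolding excess_def by (intro sum_mono) (use descent_component[of _ y x] in fastforce)
  also have "\<dots> = excess x + grad_sum x \<bullet> (y - x) + real n * L * norm (y - x)^2"
    by (simp add: excess_def grad_sum_def sum.distrib inner_sum_left)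
  finally show ?thesis .
qed

lemma grad_norm_sum_sq: "grad_norm_sum x ^ 2 \<le> 4 * real n * L * excess x"
proof -
  have "grad_norm_sum x ^ 2 = (\<Sum>j\<in>{1..n}. norm (grad j x) * 1)^2" by (simp add: grad_norm_sum_def)
  also have "\<dots> \<le> (\<Sum>j\<in>{1..n}. norm (grad j x)^2) * (\<Sum>j\<in>{1..n}. 1^2)"
    by (rule Cauchy_Schwarz_ineq_sum)
  also have "\<dots> = (\<Sum>j\<in>{1..n}. norm (grad j x)^2) * n" by simp
  also have "\<dots> \<le> (\<Sum>j\<in>{1..n}. 4 * L * (f j x - fbar)) * n"
    by (intro mult_right_mono sum_mono norm_grad_sq_le[OF deriv lip L_pos lower]) auto
  also have "\<dots> = 4 * real n * L * excess x" by (simp add: excess_def sum_distrib_left[symmetric])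
  finally show ?thesis .
qed

lemma sum_batches: "(\<Sum>t<k. \<Sum>j\<in>batch t. h j) = (\<Sum>j\<in>{1..k*b}. h j)"
proof (induction k)
  case 0 then show ?case by simp
next
  case (Suc k)
  have "{1..Suc k * b} = {1..k*b} \<union> batch k" "{1..k*b} \<inter> batch k = {}"
    by (auto simp: batch_def)
  then have "(\<Sum>j\<in>{1..Suc k*b}. h j) = (\<Sum>j\<in>{1..k*b}. h j) + (\<Sum>j\<in>batch k. h j)"
    by (simp add: batch_def sum.union_disjoint)
  then show ?case using Suc by simp
qed

lemma card_batch: "card (batch t) = b" by (simp add: batch_def)

lemma batch_subset: "t < m \<Longrightarrow> batch t \<subseteq> {1..n}"
proof -
  assume "t < m"
  then have "(t+1)*b \<le> m*b" by (intro mult_right_mono) auto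
  then show ?thesis by (auto simp: batch_def m_def)
qed

lemma sum_batches_permuted:
  "ps permutes {1..n} \<Longrightarrow> (\<Sum>t<m. \<Sum>j\<in>batch t. h (ps j)) = (\<Sum>j\<in>{1..n}. h j)"
  using sum_batches[of "\<lambda>j. h (ps j)" m] sum.reindex_bij_betw[OF permutes_imp_bij] m_def
  by (metis mult.commute)

definition "C1 = 8 * (real n * L * K)^2 / ((1 - beta) * b)"
definition "C2 = 32 * (real n * L * K)^2 * real n * L / ((1 - beta) * real b ^ 3)"
definition "C3 = 32 * real n * L / (real b ^ 2 * (1 - gam))"
definition "C4 = 8 * (real m * L * K)^2 / (1 - gam)"

lemma C1_pos: "C1 > 0" using L_pos K_pos n_pos b_pos beta1 by (simp add: C1_def)
lemma C2_nonneg: "C2 \<ge> 0" using L_pos K_pos n_pos b_pos beta1 by (simp add: C2_def)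
lemma C3_nonneg: "C3 \<ge> 0" using L_pos n_pos b_pos gam_lt1 by (simp add: C3_def)

end

text \<open>Inner indices are shifted by one against the
  paper: \<open>st t = (y\<^sub>t, y\<^sub>t\<^sub>+\<^sub>1)\<close>, and \<open>yhat t\<close>, \<open>d t\<close> carry the paper's index \<open>t + 1\<close>.\<close>
locale rrm_epoch = rrm_problem +
  fixes a :: real and ps :: "nat \<Rightarrow> nat" and p q :: 'a
  assumes a_pos: "0 < a" and a_small1: "real m * L * K * a \<le> 1/2"
    and a_small2: "4 * real n * L * a \<le> (1 - beta) * real b"
    and perm: "ps permutes {1..n}"
begin

definition "st t = rrm_inner grad b a beta lam ps (p, q) t"
definition "v t = snd (st t) - fst (st t)"
definition "w t = proxy (st t)"
definition "yhat t = snd (st t) + lam *\<^sub>R v t"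
definition "d t = (1 / real b) *\<^sub>R (\<Sum>j\<in>batch t. grad (ps j) (yhat t))"
definition "z = w 0"
definition "u = v 0"
definition "dir_norm_sum = (\<Sum>t<m. norm (d t))"
definition "batch_grad_error = (\<Sum>t<m. \<Sum>j\<in>batch t. grad (ps j) (yhat t) - grad (ps j) z)"

lemma st_Suc: "st (Suc t) = (snd (st t), snd (st t) - a *\<^sub>R d t + beta *\<^sub>R v t)"
  by (simp add: st_def rrm_step_def Let_def d_def yhat_def v_def batch_def)

lemma v_Suc: "v (Suc t) = beta *\<^sub>R v t - a *\<^sub>R d t"
  by (simp add: v_def st_Suc algebra_simps)

text \<open>The momentum cancels in the proxy, which performs plain gradient steps of length \<open>a/(1-\<beta>)\<close>.\<close>
lemma w_Suc: "w (Suc t) = w t - (a / (1 - beta)) *\<^sub>R d t"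
proof -
  have ne: "1 - beta \<noteq> 0" using beta1 by simp
  have "(1 - beta) *\<^sub>R w (Suc t) = (1 - beta) *\<^sub>R (w t - (a / (1 - beta)) *\<^sub>R d t)"
    using ne by (simp add: w_def proxy_def st_Suc v_def algebra_simps)
  then show ?thesis using ne by simp
qed

lemma w_eq_z_minus_sum: "w t = z - (a / (1 - beta)) *\<^sub>R (\<Sum>s<t. d s)"
  by (induction t) (simp_all add: z_def w_Suc scaleR_add_right)

lemma yhat_minus_w: "yhat t - w t = (lam - beta / (1 - beta)) *\<^sub>R v t"
proof -
  have "1 / (1 - beta) = 1 + beta / (1 - beta)" using beta1 by (simp add: field_simps)
  then show ?thesis unfolding w_def proxy_def yhat_def v_def by (simp add: algebra_simps)
qed

lemma norm_v_le: "norm (v t) \<le> beta^t * norm u + a * (\<Sum>s<t. norm (d s))"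
proof (induction t)
  case 0 then show ?case by (simp add: u_def)
next
  case (Suc t)
  have "norm (v (Suc t)) \<le> beta * norm (v t) + a * norm (d t)"
    unfolding v_Suc using beta0 a_pos norm_triangle_ineq4[of "beta *\<^sub>R v t" "a *\<^sub>R d t"] by simp
  also have "\<dots> \<le> beta * (beta^t * norm u + a * (\<Sum>s<t. norm (d s))) + a * norm (d t)"
    using Suc beta0 by (simp add: mult_left_mono)
  also have "\<dots> \<le> beta^Suc t * norm u + a * (\<Sum>s<Suc t. norm (d s))"
  proof -
    have "beta * (a * (\<Sum>s<t. norm (d s))) \<le> 1 * (a * (\<Sum>s<t. norm (d s)))"
      using beta1 a_pos by (intro mult_right_mono mult_nonneg_nonneg sum_nonneg) auto
    then show ?thesis by (simp add: algebra_simps)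
  qed
  finally show ?case .
qed

lemma partial_dir_norm_sum_le: "t \<le> m \<Longrightarrow> (\<Sum>s<t. norm (d s)) \<le> dir_norm_sum"
  unfolding dir_norm_sum_def by (rule sum_mono2) auto

lemma dir_norm_sum_nonneg: "dir_norm_sum \<ge> 0"
  unfolding dir_norm_sum_def by (auto intro: sum_nonneg)

lemma norm_yhat_minus_z_le: "t < m \<Longrightarrow> norm (yhat t - z) \<le> K * (norm u + a * dir_norm_sum)"
proof -
  assume t: "t < m"
  have "\<bar>lam - beta / (1 - beta)\<bar> \<le> beta / (1 - beta)"
    using beta0 beta1 lam0 lam1 by (simp add: abs_le_iff)
  also have "\<dots> \<le> 1 / (1 - beta)" using beta1 by (intro divide_right_mono) auto
  finally have coeff: "\<bar>lam - beta / (1 - beta)\<bar> \<le> 1 / (1 - beta)" .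
  have "beta^t * norm u \<le> norm u" using beta0 beta1 by (simp add: mult_left_le_one_le power_le_one)
  then have v_le: "norm (v t) \<le> norm u + a * dir_norm_sum"
    using norm_v_le[of t] partial_dir_norm_sum_le[of t] t a_pos
    by (smt (verit) mult_left_mono less_imp_le)
  have "norm (w t - z) = a / (1 - beta) * norm (\<Sum>s<t. d s)"
    using a_pos beta1 by (simp add: w_eq_z_minus_sum)
  also have "\<dots> \<le> a / (1 - beta) * (\<Sum>s<t. norm (d s))"
    using a_pos beta1 by (intro mult_left_mono norm_sum) auto
  also have "\<dots> \<le> a / (1 - beta) * dir_norm_sum"
    using partial_dir_norm_sum_le[of t] t a_pos beta1 by (intro mult_left_mono) auto
  finally have w_le: "norm (w t - z) \<le> a / (1 - beta) * dir_norm_sum" .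
  have "norm (yhat t - z) \<le> norm (yhat t - w t) + norm (w t - z)"
    by (metis diff_add_cancel norm_triangle_ineq add_diff_eq)
  also have "norm (yhat t - w t) \<le> 1 / (1 - beta) * (norm u + a * dir_norm_sum)"
    unfolding yhat_minus_w norm_scaleR using coeff v_le beta1 by (intro mult_mono) auto
  also note w_le
  also have "1 / (1 - beta) * (norm u + a * dir_norm_sum) + a / (1 - beta) * dir_norm_sum
      = (norm u + 2 * a * dir_norm_sum) / (1 - beta)"
    by (simp add: add_divide_distrib)
  also have "\<dots> \<le> (2 * norm u + 2 * a * dir_norm_sum) / (1 - beta)"
    using beta1 by (intro divide_right_mono) auto
  finally show ?thesis by (simp add: K_def mult.assoc)
qed

lemma ps_in: "t < m \<Longrightarrow> j \<in> batch t \<Longrightarrow> ps j \<in> {1..n}"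
  using batch_subset permutes_in_image[OF perm] by blast

lemma norm_grad_yhat_minus_grad_z_le:
  "t < m \<Longrightarrow> j \<in> batch t \<Longrightarrow>
    norm (grad (ps j) (yhat t) - grad (ps j) z) \<le> L * K * (norm u + a * dir_norm_sum)"
  using lip[OF ps_in, of t j "yhat t" z] norm_yhat_minus_z_le[of t] L_pos
  by (smt (verit) mult.assoc mult_left_mono)

lemma norm_d_le:
  assumes t: "t < m"
  shows "norm (d t) \<le> (1 / b) * (\<Sum>j\<in>batch t. norm (grad (ps j) z)) + L * K * (norm u + a * dir_norm_sum)"
proof -
  have "norm (d t) \<le> (1 / b) * (\<Sum>j\<in>batch t. norm (grad (ps j) (yhat t)))"
    by (simp add: d_def norm_sum divide_right_mono)
  also have "\<dots> \<le> (1 / b) * (\<Sum>j\<in>batch t. norm (grad (ps j) z) + L * K * (norm u + a * dir_norm_sum))"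
  proof (intro mult_left_mono sum_mono)
    fix j assume j: "j \<in> batch t"
    show "norm (grad (ps j) (yhat t)) \<le> norm (grad (ps j) z) + L * K * (norm u + a * dir_norm_sum)"
      using norm_grad_yhat_minus_grad_z_le[OF t j]
        norm_triangle_ineq2[of "grad (ps j) (yhat t)" "grad (ps j) z"] by linarith
  qed simp
  also have "\<dots> = (1 / b) * (\<Sum>j\<in>batch t. norm (grad (ps j) z)) + L * K * (norm u + a * dir_norm_sum)"
    using b_pos by (simp add: sum.distrib card_batch field_simps)
  finally show ?thesis .
qed

text \<open>The bound on the step size absorbs the \<open>dir_norm_sum\<close> term on the right of \<open>norm_d_le\<close>.\<close>
lemma dir_norm_sum_le: "dir_norm_sum \<le> 2 * grad_norm_sum z / b + 2 * real m * L * K * norm u"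
proof -
  have "dir_norm_sum \<le> (\<Sum>t<m. (1 / b) * (\<Sum>j\<in>batch t. norm (grad (ps j) z))
                                  + L * K * (norm u + a * dir_norm_sum))"
    by (subst (1) dir_norm_sum_def) (rule sum_mono, use norm_d_le in auto)
  also have "\<dots> = grad_norm_sum z / b + real m * L * K * norm u + (real m * L * K * a) * dir_norm_sum"
    using sum_batches_permuted[OF perm, of "\<lambda>j. norm (grad j z)"]
    by (simp add: sum.distrib sum_divide_distrib[symmetric] grad_norm_sum_def algebra_simps)
  also have "(real m * L * K * a) * dir_norm_sum \<le> (1/2) * dir_norm_sum"
    using a_small1 dir_norm_sum_nonneg by (rule mult_right_mono)
  finally show ?thesis by simp
qed

lemma step_dir_norm_sum_le: "a * dir_norm_sum \<le> 2 * a * grad_norm_sum z / b + norm u"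
proof -
  have "a * dir_norm_sum \<le> a * (2 * grad_norm_sum z / b + 2 * real m * L * K * norm u)"
    using dir_norm_sum_le a_pos by (intro mult_left_mono) auto
  also have "\<dots> = 2 * a * grad_norm_sum z / b + (2 * (real m * L * K * a)) * norm u"
    by (simp add: algebra_simps)
  also have "(2 * (real m * L * K * a)) * norm u \<le> norm u"
    using a_small1 mult_right_mono[of "2 * (real m * L * K * a)" 1 "norm u"] by simp
  finally show ?thesis by simp
qed

lemma sum_d_eq: "real b *\<^sub>R (\<Sum>t<m. d t) = grad_sum z + batch_grad_error"
proof -
  have "real b *\<^sub>R (\<Sum>t<m. d t) = (\<Sum>t<m. \<Sum>j\<in>batch t. grad (ps j) (yhat t))"
    using b_pos by (simp add: d_def scaleR_sum_right)
  also have "\<dots> = (\<Sum>t<m. \<Sum>j\<in>batch t. grad (ps j) z) + batch_grad_error"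
    by (simp add: batch_grad_error_def sum_subtractf)
  also have "(\<Sum>t<m. \<Sum>j\<in>batch t. grad (ps j) z) = grad_sum z"
    using sum_batches_permuted[OF perm, of "\<lambda>i. grad i z"] by (simp add: grad_sum_def)
  finally show ?thesis .
qed

lemma norm_batch_grad_error_le:
  "norm batch_grad_error \<le> real n * L * K * (norm u + a * dir_norm_sum)"
proof -
  have "norm batch_grad_error \<le> (\<Sum>t<m. norm (\<Sum>j\<in>batch t. grad (ps j) (yhat t) - grad (ps j) z))"
    unfolding batch_grad_error_def by (rule norm_sum)
  also have "\<dots> \<le> (\<Sum>t<m. \<Sum>j\<in>batch t. norm (grad (ps j) (yhat t) - grad (ps j) z))"
    by (intro sum_mono norm_sum)
  also have "\<dots> \<le> (\<Sum>t<m. \<Sum>j\<in>batch t. L * K * (norm u + a * dir_norm_sum))"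
    by (intro sum_mono norm_grad_yhat_minus_grad_z_le) auto
  also have "\<dots> = real n * L * K * (norm u + a * dir_norm_sum)"
    by (simp add: card_batch m_def)
  finally show ?thesis .
qed

lemma norm_batch_grad_error_sq_le:
  "norm batch_grad_error ^ 2
     \<le> (real n * L * K)^2 * (8 * norm u^2 + 32 * a^2 * real n * L * excess z / real b ^ 2)"
proof -
  have "norm batch_grad_error \<le> real n * L * K * (norm u + a * dir_norm_sum)"
    by (rule norm_batch_grad_error_le)
  also have "\<dots> \<le> real n * L * K * (2 * norm u + 2 * a * grad_norm_sum z / b)"
    using step_dir_norm_sum_le L_pos K_pos by (intro mult_left_mono) auto
  finally have "norm batch_grad_error ^ 2 \<le> (real n * L * K * (2 * norm u + 2 * a * grad_norm_sum z / b))^2"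
    by (intro power_mono) auto
  also have "\<dots> = (real n * L * K)^2 * (2 * norm u + 2 * a * grad_norm_sum z / b)^2"
    by (simp add: power_mult_distrib)
  also have "(2 * norm u + 2 * a * grad_norm_sum z / b)^2 \<le> 8 * norm u^2 + 8 * a^2 * grad_norm_sum z^2 / real b ^ 2"
    using sum_squares_bound[of "2 * norm u" "2 * a * grad_norm_sum z / b"]
    by (simp add: power2_sum power_mult_distrib power_divide)
  also have "8 * a^2 * grad_norm_sum z^2 / real b ^ 2 \<le> 32 * a^2 * real n * L * excess z / real b ^ 2"
    using mult_left_mono[OF grad_norm_sum_sq[of z], of "8 * a^2"]
    by (intro divide_right_mono) (simp_all add: algebra_simps)
  finally show ?thesis by (simp add: mult_left_mono)
qed

text \<open>Since \<open>w m - z = -s (grad_sum z + batch_grad_error)\<close> with \<open>n L s \<le> 1/4\<close>, the descent lemma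
  leaves only the error term: \<open>-s(X\<^sup>2 - X Y) + s(X + Y)\<^sup>2/4 \<le> s Y\<^sup>2\<close> for the norms \<open>X, Y\<close> of the two
  summands.\<close>
lemma excess_w_m_le_error: "excess (w m) \<le> excess z + a / ((1 - beta) * b) * norm batch_grad_error ^ 2"
proof -
  define s where "s = a / ((1 - beta) * b)"
  define X where "X = norm (grad_sum z)"
  define Y where "Y = norm batch_grad_error"
  have s_pos: "s > 0" using a_pos beta1 b_pos by (simp add: s_def)
  have nLs: "real n * L * s \<le> 1/4"
    using a_small2 beta1 b_pos L_pos by (simp add: s_def field_simps)
  have wm: "w m - z = - s *\<^sub>R (grad_sum z + batch_grad_error)"
    using sum_d_eq[symmetric] b_pos beta1 by (simp add: w_eq_z_minus_sum s_def)
  have "excess (w m) \<le> excess z + grad_sum z \<bullet> (w m - z) + real n * L * norm (w m - z)^2"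
    by (rule excess_descent)
  also have "grad_sum z \<bullet> (w m - z) \<le> - s * X^2 + s * (X * Y)"
    using mult_left_mono[OF norm_cauchy_schwarz[of "- grad_sum z" batch_grad_error], of s] s_pos
    by (simp add: wm inner_add_right X_def Y_def power2_norm_eq_inner algebra_simps)
  also have "real n * L * norm (w m - z)^2 \<le> (1/4) * s * (X + Y)^2"
  proof -
    have "norm (w m - z)^2 \<le> s^2 * (X + Y)^2"
      using s_pos norm_triangle_ineq[of "grad_sum z" batch_grad_error]
      by (simp add: wm X_def Y_def power_mult_distrib power_mono)
    then have "real n * L * norm (w m - z)^2 \<le> (real n * L * s) * s * (X + Y)^2"
      using L_pos by (simp add: mult_left_mono power2_eq_square mult.assoc)
    also have "\<dots> \<le> (1/4) * s * (X + Y)^2"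
      using nLs s_pos by (intro mult_right_mono) auto
    finally show ?thesis .
  qed
  also have "excess z + (- s * X^2 + s * (X * Y)) + (1/4) * s * (X + Y)^2
      = excess z + s * Y^2 - (3/4) * s * (X - Y)^2"
    by (simp add: field_simps power2_eq_square)
  also have "\<dots> \<le> excess z + s * Y^2" using s_pos by simp
  finally show ?thesis by (simp add: s_def Y_def)
qed

lemma excess_w_m_le: "excess (w m) \<le> excess z + a * C1 * norm u ^ 2 + a^3 * C2 * excess z"
proof -
  have "a / ((1 - beta) * b) * norm batch_grad_error ^ 2
      \<le> a / ((1 - beta) * b) * ((real n * L * K)^2 * (8 * norm u^2 + 32 * a^2 * real n * L * excess z / real b ^ 2))"
    using norm_batch_grad_error_sq_le a_pos beta1 by (intro mult_left_mono) auto
  also have "\<dots> = a * C1 * norm u ^ 2 + a^3 * C2 * excess z"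
  proof -
    have "a / ((1 - beta) * b) * ((real n * L * K)^2 * (8 * norm u^2)) = a * C1 * norm u^2"
      by (simp add: C1_def)
    moreover have "a / ((1 - beta) * b) * ((real n * L * K)^2 * (32 * a^2 * real n * L * excess z / real b ^ 2))
        = a^3 * C2 * excess z"
      using beta1 b_pos by (simp add: C2_def field_simps power2_eq_square power3_eq_cube)
    ultimately show ?thesis by (simp add: distrib_left)
  qed
  finally show ?thesis using excess_w_m_le_error by linarith
qed

lemma norm_v_m_le: "norm (v m) \<le> gam * norm u + a * (2 * grad_norm_sum z / b + 2 * real m * L * K * norm u)"
proof -
  have "norm (v m) \<le> gam * norm u + a * dir_norm_sum"
    using norm_v_le[of m] by (simp add: gam_def dir_norm_sum_def)
  also have "a * dir_norm_sum \<le> a * (2 * grad_norm_sum z / b + 2 * real m * L * K * norm u)"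
    using dir_norm_sum_le a_pos by (intro mult_left_mono) auto
  finally show ?thesis by simp
qed

lemma norm_v_m_sq_le: "norm (v m)^2 \<le> gam * norm u^2 + a^2 * C3 * excess z + a^2 * C4 * norm u^2"
proof -
  define Y where "Y = a * (2 * grad_norm_sum z / b + 2 * real m * L * K * norm u)"
  have "norm (v m)^2 \<le> gam * norm u^2 + Y^2 / (1 - gam)"
    by (rule power2_le_convex_split) (use gam_nonneg gam_lt1 norm_v_m_le in \<open>auto simp: Y_def\<close>)
  also have "Y^2 \<le> a^2 * (8 * grad_norm_sum z^2 / real b ^ 2 + 8 * (real m * L * K)^2 * norm u^2)"
  proof -
    have "(2 * grad_norm_sum z / b + 2 * real m * L * K * norm u)^2
        \<le> 2 * (2 * grad_norm_sum z / b)^2 + 2 * (2 * real m * L * K * norm u)^2"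
      using sum_squares_bound[of "2 * grad_norm_sum z / b" "2 * real m * L * K * norm u"]
      by (simp add: power2_sum)
    also have "\<dots> = 8 * grad_norm_sum z^2 / real b ^ 2 + 8 * (real m * L * K)^2 * norm u^2"
      by (simp add: power_mult_distrib power_divide)
    finally show ?thesis by (simp add: Y_def power_mult_distrib mult_left_mono)
  qed
  also have "8 * grad_norm_sum z^2 / real b ^ 2 \<le> 32 * real n * L * excess z / real b ^ 2"
    using mult_left_mono[OF grad_norm_sum_sq[of z], of 8]
    by (intro divide_right_mono) (simp_all add: algebra_simps)
  finally have "norm (v m)^2 \<le> gam * norm u^2
      + a^2 * (32 * real n * L * excess z / real b ^ 2 + 8 * (real m * L * K)^2 * norm u^2) / (1 - gam)"
    using gam_lt1 by (simp add: divide_right_mono mult_left_mono)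
  also have "\<dots> = gam * norm u^2 + a^2 * (32 * real n * L * excess z / real b ^ 2 / (1 - gam))
      + a^2 * (8 * (real m * L * K)^2 * norm u^2 / (1 - gam))"
    by (simp add: add_divide_distrib distrib_left)
  also have "32 * real n * L * excess z / real b ^ 2 / (1 - gam) = C3 * excess z"
    by (simp add: C3_def)
  also have "8 * (real m * L * K)^2 * norm u^2 / (1 - gam) = C4 * norm u^2"
    by (simp add: C4_def)
  finally show ?thesis by (simp add: mult.assoc)
qed

end

context rrm_problem
begin

text \<open>\<open>Bc\<close> is the weight of the momentum term in the Lyapunov function
  \<open>excess (proxy s) + Bc \<alpha> momentum_norm s\<^sup>2\<close>, and \<open>Cc\<close> its growth rate per epoch.\<close>
definition "Bc = 2 * C1 / (1 - gam)"
definition "Cc = C2 + Bc * C3"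

lemma Bc_pos: "Bc > 0" using C1_pos gam_lt1 by (simp add: Bc_def)
lemma Cc_nonneg: "Cc \<ge> 0" using C2_nonneg C3_nonneg Bc_pos by (simp add: Cc_def)

definition admissible :: "real \<Rightarrow> bool" where
  "admissible a \<longleftrightarrow> 0 < a \<and> real m * L * K * a \<le> 1/2 \<and> 4 * real n * L * a \<le> (1 - beta) * real b
     \<and> Bc * C4 * a^2 \<le> C1 \<and> 2 * real m * L * K * a \<le> (1 - gam) / 2"

lemma eventually_admissible: "eventually admissible (at_right 0)"
proof -
  have small: "eventually (\<lambda>a. c * a ^ k < r) (at_right 0)" if "0 < r" "0 < k" for c r :: real and k :: nat
  proof (rule order_tendstoD(2)[OF _ that(1)])
    have "((\<lambda>a. c * a ^ k) \<longlongrightarrow> c * 0 ^ k) (at_right 0)" by (intro tendsto_intros)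
    then show "((\<lambda>a. c * a ^ k) \<longlongrightarrow> 0) (at_right 0)" using that(2) by (simp add: zero_power)
  qed
  have "eventually (\<lambda>a. real m * L * K * a ^ 1 < 1/2) (at_right 0)"
    by (rule small) auto
  moreover have "eventually (\<lambda>a. 4 * real n * L * a ^ 1 < (1 - beta) * real b) (at_right 0)"
    by (rule small) (use beta1 b_pos in auto)
  moreover have "eventually (\<lambda>a. Bc * C4 * a ^ 2 < C1) (at_right 0)"
    by (rule small) (use C1_pos in auto)
  moreover have "eventually (\<lambda>a. 2 * real m * L * K * a ^ 1 < (1 - gam) / 2) (at_right 0)"
    by (rule small) (use gam_lt1 in auto)
  ultimately show ?thesis using eventually_at_right_less[of 0]
    by eventually_elim (auto simp: admissible_def)
qed

lemma eventually_admissible_sequentially: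
  assumes "alpha \<longlonglongrightarrow> 0" "eventually (\<lambda>k. 0 < alpha k) sequentially"
  shows "eventually (\<lambda>k. admissible (alpha k)) sequentially"
  using eventually_admissible tendsto_imp_filterlim_at_right[OF assms]
  by (rule eventually_compose_filterlim)

lemma rrm_epochI:
  "admissible a \<Longrightarrow> ps permutes {1..n} \<Longrightarrow> rrm_epoch f grad n b m L fbar beta lam a ps"
  by (intro rrm_epoch.intro rrm_problem_axioms rrm_epoch_axioms.intro) (auto simp: admissible_def)

lemma epoch_lyapunov:
  fixes s :: "'a \<times> 'a"
  assumes a: "admissible a" and ps: "ps permutes {1..n}" and a': "0 \<le> a'" "a' \<le> a"
  defines "s' \<equiv> rrm_inner grad b a beta lam ps s m"
  shows "excess (proxy s') + Bc * a' * momentum_norm s'^2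
           \<le> (1 + Cc * a^3) * (excess (proxy s) + Bc * a * momentum_norm s^2)"
proof -
  interpret E: rrm_epoch f grad n b m L fbar beta lam a ps "fst s" "snd s"
    using a ps by (rule rrm_epochI)
  define FF where "FF = excess (proxy s)"
  define U where "U = momentum_norm s"
  have FF: "FF \<ge> 0" by (simp add: FF_def excess_nonneg)
  have a_pos: "a > 0" using a by (simp add: admissible_def)
  have h1: "excess (proxy s') \<le> FF + a * C1 * U^2 + a^3 * C2 * FF"
    using E.excess_w_m_le
    by (simp add: s'_def E.z_def E.u_def E.w_def E.v_def E.st_def FF_def U_def momentum_norm_def)
  have h2: "momentum_norm s' ^ 2 \<le> gam * U^2 + a^2 * C3 * FF + a^2 * C4 * U^2"
    using E.norm_v_m_sq_le
    by (simp add: s'_def E.z_def E.u_def E.w_def E.v_def E.st_def FF_def U_def momentum_norm_def)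
  have "Bc * a' * momentum_norm s' ^ 2 \<le> Bc * a * momentum_norm s' ^ 2"
    using a' Bc_pos by (intro mult_right_mono mult_left_mono) auto
  also have "\<dots> \<le> Bc * a * (gam * U^2 + a^2 * C3 * FF + a^2 * C4 * U^2)"
    using h2 Bc_pos a_pos by (intro mult_left_mono) auto
  finally have h3: "Bc * a' * momentum_norm s' ^ 2 \<le> Bc * a * (gam * U^2 + a^2 * C3 * FF + a^2 * C4 * U^2)" .
  text \<open>The momentum terms are absorbed because \<open>Bc (1 - \<gamma>) = 2 C1\<close> and \<open>Bc C4 a\<^sup>2 \<le> C1\<close>.\<close>
  have absorb: "a * U^2 * (C1 + Bc * gam + Bc * C4 * a^2) \<le> a * U^2 * Bc"
  proof (rule mult_left_mono)
    have "Bc * (1 - gam) = 2 * C1" using gam_lt1 by (simp add: Bc_def)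
    then show "C1 + Bc * gam + Bc * C4 * a^2 \<le> Bc" using a by (simp add: admissible_def algebra_simps)
  qed (use a_pos in simp)
  have "excess (proxy s') + Bc * a' * momentum_norm s' ^ 2
      \<le> FF + a^3 * Cc * FF + a * U^2 * (C1 + Bc * gam + Bc * C4 * a^2)"
  proof -
    have "Bc * a * (gam * U^2 + a^2 * C3 * FF + a^2 * C4 * U^2)
        = a * U^2 * (Bc * gam) + a^3 * (Bc * C3) * FF + a * U^2 * (Bc * C4 * a^2)"
      by (simp add: algebra_simps power3_eq_cube power2_eq_square)
    moreover have "a^3 * Cc * FF = a^3 * C2 * FF + a^3 * (Bc * C3) * FF"
      by (simp add: Cc_def algebra_simps)
    moreover have "a * U^2 * (C1 + Bc * gam + Bc * C4 * a^2)
        = a * C1 * U^2 + a * U^2 * (Bc * gam) + a * U^2 * (Bc * C4 * a^2)"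
      by (simp add: algebra_simps)
    ultimately show ?thesis using h1 h3 by linarith
  qed
  also have "\<dots> \<le> FF + a^3 * Cc * FF + a * U^2 * Bc" using absorb by simp
  also have "\<dots> \<le> (1 + Cc * a^3) * (FF + Bc * a * U^2)"
  proof -
    have "0 \<le> Cc * a^3 * (Bc * a * U^2)" using Cc_nonneg Bc_pos a_pos by simp
    then show ?thesis by (simp add: algebra_simps)
  qed
  finally show ?thesis by (simp add: FF_def U_def)
qed

lemma epoch_momentum_contraction:
  assumes a: "admissible a" and ps: "ps permutes {1..n}"
  shows "momentum_norm (rrm_inner grad b a beta lam ps s m)
           \<le> (1 + gam) / 2 * momentum_norm s + 2 * a * grad_norm_sum (proxy s) / b"
proof -
  interpret E: rrm_epoch f grad n b m L fbar beta lam a ps "fst s" "snd s"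
    using a ps by (rule rrm_epochI)
  have "momentum_norm (rrm_inner grad b a beta lam ps s m)
      \<le> gam * momentum_norm s + a * (2 * grad_norm_sum (proxy s) / b + 2 * real m * L * K * momentum_norm s)"
    using E.norm_v_m_le by (simp add: E.z_def E.u_def E.w_def E.v_def E.st_def momentum_norm_def)
  also have "\<dots> = (gam + 2 * real m * L * K * a) * momentum_norm s + 2 * a * grad_norm_sum (proxy s) / b"
    by (simp add: algebra_simps)
  also have "\<dots> \<le> (1 + gam) / 2 * momentum_norm s + 2 * a * grad_norm_sum (proxy s) / b"
    using a by (intro add_right_mono mult_right_mono) (auto simp: admissible_def momentum_norm_def)
  finally show ?thesis .
qed

context
  fixes S :: "nat \<Rightarrow> 'a \<times> 'a" and alpha :: "nat \<Rightarrow> real" and ps :: "nat \<Rightarrow> nat \<Rightarrow> nat" and N :: nat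
  assumes S_Suc: "\<And>k. k \<ge> N \<Longrightarrow> S (Suc k) = rrm_inner grad b (alpha k) beta lam (ps k) (S k) m"
    and admissible_alpha: "\<And>k. k \<ge> N \<Longrightarrow> admissible (alpha k)"
    and alpha_noninc: "\<And>k. k \<ge> N \<Longrightarrow> alpha (Suc k) \<le> alpha k"
    and perm: "\<And>k. k \<ge> N \<Longrightarrow> ps k permutes {1..n}"
    and alpha_cube: "summable (\<lambda>k. alpha k ^ 3)"
begin

lemma excess_proxy_bounded: "\<exists>M. \<forall>k\<ge>N. excess (proxy (S k)) \<le> M"
proof -
  define Psi where "Psi k = excess (proxy (S k)) + Bc * alpha k * momentum_norm (S k)^2" for k
  have alpha_pos: "k \<ge> N \<Longrightarrow> alpha k > 0" for k
    using admissible_alpha by (simp add: admissible_def)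
  have "Psi (Suc k) \<le> (1 + Cc * alpha k ^ 3) * Psi k" if k: "k \<ge> N" for k
    unfolding Psi_def S_Suc[OF k] using alpha_pos[of "Suc k"] k
    by (intro epoch_lyapunov admissible_alpha perm alpha_noninc) auto
  moreover have "k \<ge> N \<Longrightarrow> 0 \<le> Psi k" for k
    using excess_nonneg Bc_pos alpha_pos[of k] by (simp add: Psi_def)
  moreover have "k \<ge> N \<Longrightarrow> 0 \<le> Cc * alpha k ^ 3" for k
    using Cc_nonneg alpha_pos[of k] by simp
  moreover have "summable (\<lambda>k. Cc * alpha k ^ 3)" using alpha_cube by (rule summable_mult)
  ultimately have "\<exists>M. \<forall>k\<ge>N. Psi k \<le> M" by (rule multiplicative_growth_bounded)
  then obtain M where M: "\<forall>k\<ge>N. Psi k \<le> M" by blast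
  have "k \<ge> N \<Longrightarrow> excess (proxy (S k)) \<le> Psi k" for k
    using Bc_pos alpha_pos[of k] by (simp add: Psi_def)
  with M show ?thesis by (blast intro: order_trans)
qed

lemma momentum_norm_tendsto_zero:
  assumes alpha_lim: "alpha \<longlonglongrightarrow> 0"
  shows "(\<lambda>k. momentum_norm (S k)) \<longlonglongrightarrow> 0"
proof -
  obtain M where M: "\<And>k. k \<ge> N \<Longrightarrow> excess (proxy (S k)) \<le> M"
    using excess_proxy_bounded by blast
  define G where "G = 1 + 4 * real n * L * M"
  have grad_bounded: "grad_norm_sum (proxy (S k)) \<le> G" if k: "k \<ge> N" for k
  proof -
    have "2 * grad_norm_sum (proxy (S k)) \<le> grad_norm_sum (proxy (S k)) ^ 2 + 1"
      using zero_le_power2[of "grad_norm_sum (proxy (S k)) - 1"] by (simp add: power2_diff)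
    then have "grad_norm_sum (proxy (S k)) \<le> 1 + grad_norm_sum (proxy (S k)) ^ 2"
      using zero_le_power2[of "grad_norm_sum (proxy (S k))"] by linarith
    also have "\<dots> \<le> G"
      using grad_norm_sum_sq[of "proxy (S k)"] mult_left_mono[OF M[OF k], of "4 * real n * L"] L_pos
      by (simp add: G_def)
    finally show ?thesis .
  qed
  show ?thesis
  proof (rule perturbed_contraction_LIMSEQ_zero[where e = "\<lambda>k. alpha k * (2 * G / b)" and N = N])
    show "0 \<le> (1 + gam) / 2" "(1 + gam) / 2 < 1" using gam_nonneg gam_lt1 by auto
    show "momentum_norm (S (Suc k)) \<le> (1 + gam) / 2 * momentum_norm (S k) + alpha k * (2 * G / b)"
      if k: "N \<le> k" for k
    proof -
      have "2 * alpha k * grad_norm_sum (proxy (S k)) / b \<le> alpha k * (2 * G / b)"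
        using grad_bounded[OF k] admissible_alpha[OF k] b_pos
        by (simp add: admissible_def divide_right_mono mult_left_mono)
      then show ?thesis
        using epoch_momentum_contraction[OF admissible_alpha[OF k] perm[OF k], of "S k"] S_Suc[OF k]
        by simp
    qed
    show "(\<lambda>k. alpha k * (2 * G / b)) \<longlonglongrightarrow> 0" by (rule tendsto_mult_left_zero[OF alpha_lim])
    show "0 \<le> momentum_norm (S k)" for k by (simp add: momentum_norm_def)
  qed
qed

end

end

theorem lemma5p3:
  fixes f :: "nat \<Rightarrow> 'a::euclidean_space \<Rightarrow> real"
    and grad :: "nat \<Rightarrow> 'a \<Rightarrow> 'a"
    and n b m :: nat and L fbar beta lam :: real
    and alpha :: "nat \<Rightarrow> real" and ps :: "nat \<Rightarrow> nat \<Rightarrow> nat" and x1 :: 'a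
  assumes n_pos: "n \<ge> 1" and b_pos: "b \<ge> 1" and m_def: "n = m * b"
    and deriv: "\<And>i x. i \<in> {1..n} \<Longrightarrow> (f i has_derivative (\<lambda>h. grad i x \<bullet> h)) (at x)"
    and grad_cont: "\<And>i. i \<in> {1..n} \<Longrightarrow> continuous_on UNIV (grad i)"
    and L_pos: "L > 0"
    and lip: "\<And>i x y. i \<in> {1..n} \<Longrightarrow> norm (grad i x - grad i y) \<le> L * norm (x - y)"
    and lower: "\<And>i x. i \<in> {1..n} \<Longrightarrow> f i x \<ge> fbar"
    and alpha_pos: "\<And>k. k \<ge> 1 \<Longrightarrow> alpha k > 0"
    and alpha_noninc: "\<And>k. k \<ge> 1 \<Longrightarrow> alpha (Suc k) \<le> alpha k"
    and beta: "0 \<le> beta" "beta < 1"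
    and lam: "0 \<le> lam" "lam \<le> beta / (1 - beta)"
    and alpha_bound: "\<And>k. k \<ge> 1 \<Longrightarrow>
         alpha k \<le> (1 - beta) * (1 - beta ^ m) / (4 * L * real m)"
    and alpha_div: "filterlim (\<lambda>N. \<Sum>k=1..N. alpha k) at_top sequentially"
    and alpha_cube: "summable (\<lambda>k. alpha (Suc k) ^ 3)"
    and perm: "\<And>k. k \<ge> 1 \<Longrightarrow> ps k permutes {1..n}"
  shows "(\<lambda>k. norm (
            ((1 / (1 - beta)) *\<^sub>R snd (rrm_state grad b m alpha beta lam ps x1 k)
              - (beta / (1 - beta)) *\<^sub>R fst (rrm_state grad b m alpha beta lam ps x1 k))
            - snd (rrm_state grad b m alpha beta lam ps x1 k))) \<longlonglongrightarrow> 0"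
proof -
  interpret R: rrm_problem f grad n b m L fbar beta lam
    by unfold_locales (use n_pos b_pos m_def deriv L_pos lip lower beta lam in auto)
  define S where "S k = rrm_state grad b m alpha beta lam ps x1 k" for k
  have S_Suc: "S (Suc k) = rrm_inner grad b (alpha k) beta lam (ps k) (S k) m" if "k \<ge> 1" for k
    using that by (cases k) (auto simp: S_def)
  have "(\<lambda>k. alpha (Suc k)) \<longlonglongrightarrow> 0"
  proof (rule LIMSEQ_zero_of_power[OF summable_LIMSEQ_zero[OF alpha_cube]])
    show "0 \<le> alpha (Suc k)" for k using alpha_pos[of "Suc k"] by simp
  qed simp
  then have alpha_lim: "alpha \<longlonglongrightarrow> 0" by (rule LIMSEQ_imp_Suc)
  have "eventually (\<lambda>k. R.admissible (alpha k)) sequentially"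
    using alpha_lim alpha_pos
    by (intro R.eventually_admissible_sequentially) (auto simp: eventually_sequentially)
  then obtain N where N: "\<And>k. k \<ge> N \<Longrightarrow> R.admissible (alpha k)"
    by (auto simp: eventually_sequentially)
  have "(\<lambda>k. R.momentum_norm (S k)) \<longlonglongrightarrow> 0"
  proof (rule R.momentum_norm_tendsto_zero[of "max N 1"])
    fix k assume k: "max N 1 \<le> k"
    then show "S (Suc k) = rrm_inner grad b (alpha k) beta lam (ps k) (S k) m" by (intro S_Suc) simp
    show "R.admissible (alpha k)" using N k by simp
    show "alpha (Suc k) \<le> alpha k" using alpha_noninc k by simp
    show "ps k permutes {1..n}" using perm k by simp
  next
    show "summable (\<lambda>k. alpha k ^ 3)" using alpha_cube summable_Suc_iff[of "\<lambda>k. alpha k ^ 3"] by simp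
  qed (rule alpha_lim)
  then have "(\<lambda>k. norm (R.proxy (S k) - snd (S k))) \<longlonglongrightarrow> 0"
    unfolding R.norm_proxy_minus_snd by (rule tendsto_mult_right_zero)
  then show ?thesis by (simp only: S_def R.proxy_def)
qed

end
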